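(* Let $Q\to\mathbb R$ be a smooth fibre bundle with bundle coordinates $(t,q^i)$ ($t$ the Cartesian coordinate on $\mathbb R$), and let $\xi=\partial_t+q^i_t\partial_i+\xi^i(t,q^j,q^j_t)\partial^t_i$ be a holonomic second order connection on $Q\to\mathbb R$ (i.e. a dynamic equation $q^i_{tt}=\xi^i$). Then the local expression $$\gamma_\xi=dt\otimes\Big[\partial_t+\big(\xi^i-\tfrac12 q^j_t\partial^t_j\xi^i\big)\partial^t_i\Big]+dq^j\otimes\Big[\partial_j+\tfrac12\partial^t_j\xi^i\,\partial^t_i\Big]$$ defines a (global) connection on the affine jet bundle $J^1Q\to Q$.
   Context: $J^1Q$ and $J^2Q$ carry adapted coordinates $(t,q^i,q^i_t)$ and $(t,q^i,q^i_t,q^i_{tt})$, and $\partial^t_i=\partial/\partial q^i_t$. A holonomic second order connection on $Q\to\mathbb R$ is a section of $J^2Q\to J^1Q$, identified with a vector field $\xi=\partial_t+q^i_t\partial_i+\xi^i\partial^t_i$ on $J^1Q$. A connection on the affine jet bundle $J^1Q\to Q$ (a dynamic connection) is a section of the first jet bundle $J^1_QJ^1Q\to J^1Q$ of $J^1Q\to Q$, written locally as $dq^\lambda\otimes(\partial_\lambda+\gamma^i_\lambda\partial^t_i)$ with $q^0=t$. *)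

theory Defs
  imports "HOL-Analysis.Analysis"
begin

fun Ck_on :: "nat \<Rightarrow> 'a::real_normed_vector set \<Rightarrow> ('a \<Rightarrow> 'b::real_normed_vector) \<Rightarrow> bool" where
  "Ck_on 0 U f = continuous_on U f"
| "Ck_on (Suc k) U f =
     (f differentiable_on U \<and> (\<forall>v. Ck_on k U (\<lambda>x. frechet_derivative f (at x) v)))"

definition smooth_on :: "'a::real_normed_vector set \<Rightarrow> ('a \<Rightarrow> 'b::real_normed_vector) \<Rightarrow> bool" where
  "smooth_on U f \<longleftrightarrow> (\<forall>k. Ck_on k U f)"

(* Points of Q in a bundle chart: (t, q); points of J^1Q: (t, q, q_t). *)

definition jet_dom :: "(real \<times> (real^'n)) set \<Rightarrow> (real \<times> (real^'n) \<times> (real^'n)) set" where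
  "jet_dom U = {(t, q, v). (t, q) \<in> U}"

definition pdqt :: "(real \<times> (real^'n) \<times> (real^'n) \<Rightarrow> (real^'n)) \<Rightarrow> 'n \<Rightarrow> real \<times> (real^'n) \<times> (real^'n) \<Rightarrow> (real^'n)" where
  "pdqt f j x = frechet_derivative f (at x) (0, 0, axis j 1)"

(* the coordinate change q' = Phi(t,q), t' = t, prolonged to J^1Q:
   q'_t = d_t Phi + q^j_t d_j Phi *)
definition jet_prolong :: "(real \<times> (real^'n) \<Rightarrow> (real^'n)) \<Rightarrow> real \<times> (real^'n) \<times> (real^'n) \<Rightarrow> real \<times> (real^'n) \<times> (real^'n)" where
  "jet_prolong \<Phi> x = (case x of (t, q, v) \<Rightarrow> (t, \<Phi> (t, q), frechet_derivative \<Phi> (at (t, q)) (1, v)))"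

(* the holonomic second order connection xi as vector field
   d_t + q^i_t d_i + xi^i d^t_i on J^1Q (local components) *)
definition so_vf :: "(real \<times> (real^'n) \<times> (real^'n) \<Rightarrow> (real^'n)) \<Rightarrow> real \<times> (real^'n) \<times> (real^'n) \<Rightarrow> real \<times> (real^'n) \<times> (real^'n)" where
  "so_vf \<xi> x = (1, snd (snd x), \<xi> x)"

definition dyn_conn_t :: "(real \<times> (real^'n) \<times> (real^'n) \<Rightarrow> (real^'n)) \<Rightarrow> real \<times> (real^'n) \<times> (real^'n) \<Rightarrow> (real^'n)" where
  "dyn_conn_t \<xi> x = \<xi> x - (1/2) *\<^sub>R (\<Sum>j\<in>UNIV. (snd (snd x)) $ j *\<^sub>R pdqt \<xi> j x)"

definition dyn_conn_q :: "(real \<times> (real^'n) \<times> (real^'n) \<Rightarrow> (real^'n)) \<Rightarrow> 'n \<Rightarrow> real \<times> (real^'n) \<times> (real^'n) \<Rightarrow> (real^'n)" where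
  "dyn_conn_q \<xi> j x = (1/2) *\<^sub>R pdqt \<xi> j x"

(* horizontal lift of a tangent vector u = (u^0, u^j) of Q by the connection
   dq^lambda (x) (d_lambda + g^i_lambda d^t_i) at the point x of J^1Q *)
definition hlift :: "(real \<times> (real^'n) \<times> (real^'n) \<Rightarrow> (real^'n)) \<Rightarrow> ('n \<Rightarrow> real \<times> (real^'n) \<times> (real^'n) \<Rightarrow> (real^'n))
                     \<Rightarrow> real \<times> (real^'n) \<times> (real^'n) \<Rightarrow> real \<times> (real^'n) \<Rightarrow> real \<times> (real^'n) \<times> (real^'n)" where
  "hlift g0 gq x u = (fst u, snd u, fst u *\<^sub>R g0 x + (\<Sum>j\<in>UNIV. (snd u) $ j *\<^sub>R gq j x))"

end

theory Submission
  imports Defs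
begin

text \<open>Under a change of bundle chart \<open>q' = \<Phi>(t,q)\<close> the velocity transforms by
  \<open>q'\<^sub>t = A(1,q\<^sub>t)\<close> with \<open>A = D\<Phi>\<close>, so the dynamic equation transforms as
  \<open>\<xi>' = D\<^sup>2\<Phi>((1,q\<^sub>t),(1,q\<^sub>t)) + A(0,\<xi>)\<close>, quadratically in the velocity. Differentiating this
  law along the fibre of \<open>J\<^sup>1Q \<rightarrow> Q\<close> and using the symmetry of \<open>D\<^sup>2\<Phi>\<close> gives the
  transformation law of \<open>\<partial>\<^sup>t\<xi>\<close>, with a factor 2 that the weight 1/2 in \<open>\<gamma>\<^sub>\<xi>\<close> absorbs. The
  horizontal lift \<open>u \<mapsto> (u, u\<^sup>0 \<xi> + (\<partial>\<^sup>t\<xi>)(u\<^sup>q - u\<^sup>0 q\<^sub>t)/2)\<close> of \<open>\<gamma>\<^sub>\<xi>\<close> is therefore carried by the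
  tangent map of the prolonged chart change to that of \<open>\<gamma>\<^sub>\<xi>'\<close>, i.e. the local expressions
  define one global connection.\<close>

section \<open>Smooth functions\<close>

lemma Ck_on_SucD: "Ck_on (Suc k) U f \<Longrightarrow> Ck_on k U f"
  by (induction k arbitrary: f) (simp_all add: differentiable_imp_continuous_on)

lemma Ck_on_cong:
  assumes "open U" and "\<And>x. x \<in> U \<Longrightarrow> f x = g x" and "Ck_on k U f"
  shows "Ck_on k U g"
  using assms(2,3)
proof (induction k arbitrary: f g)
  case 0
  then show ?case using continuous_on_cong by (metis Ck_on.simps(1))
next
  case (Suc k)
  have df: "f differentiable at x" if "x \<in> U" for x
    using Suc.prems(2) that assms(1) by (simp add: differentiable_on_eq_differentiable_at)
  have "g differentiable_on U"
    unfolding differentiable_on_eq_differentiable_at[OF assms(1)]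
    by (metis df Suc.prems(1) assms(1) differentiable_def has_derivative_transform_within_open)
  moreover have "Ck_on k U (\<lambda>x. frechet_derivative g (at x) v)" for v
  proof (rule Suc.IH)
    show "frechet_derivative f (at x) v = frechet_derivative g (at x) v" if "x \<in> U" for x
      using frechet_derivative_transform_within_open[OF df[OF that] assms(1) that] Suc.prems(1)
      by metis
    show "Ck_on k U (\<lambda>x. frechet_derivative f (at x) v)"
      using Suc.prems(2) by simp
  qed
  ultimately show ?case by simp
qed

lemma Ck_on_const: "Ck_on k U (\<lambda>x. c)"
  by (induction k arbitrary: c) simp_all

lemma Ck_on_bounded_linear: "bounded_linear L \<Longrightarrow> Ck_on k U L"
proof (induction k)
  case 0
  then show ?case by (simp add: linear_continuous_on)
next
  case (Suc k)
  have "frechet_derivative L (at x) = L" for x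
    using Suc.prems frechet_derivative_at bounded_linear_imp_has_derivative by metis
  then show ?case
    using Suc.prems by (simp add: Ck_on_const bounded_linear_imp_differentiable_on)
qed

lemma Ck_on_add:
  assumes "open U"
  shows "Ck_on k U f \<Longrightarrow> Ck_on k U g \<Longrightarrow> Ck_on k U (\<lambda>x. f x + g x)"
proof (induction k arbitrary: f g)
  case 0
  then show ?case by (simp add: continuous_on_add)
next
  case (Suc k)
  have df: "f differentiable_on U" and dg: "g differentiable_on U"
    using Suc.prems by simp_all
  have "Ck_on k U (\<lambda>x. frechet_derivative (\<lambda>x. f x + g x) (at x) v)" for v
  proof (rule Ck_on_cong[OF assms])
    show "Ck_on k U (\<lambda>x. frechet_derivative f (at x) v + frechet_derivative g (at x) v)"
      using Suc by simp
    fix x assume "x \<in> U"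
    then have "f differentiable at x" "g differentiable at x"
      using df dg assms by (auto simp: differentiable_on_eq_differentiable_at)
    then have "((\<lambda>x. f x + g x) has_derivative
        (\<lambda>v. frechet_derivative f (at x) v + frechet_derivative g (at x) v)) (at x)"
      by (intro has_derivative_add) (auto simp: frechet_derivative_works)
    then show "frechet_derivative f (at x) v + frechet_derivative g (at x) v
        = frechet_derivative (\<lambda>x. f x + g x) (at x) v"
      using frechet_derivative_at by metis
  qed
  then show ?case using df dg by (simp add: differentiable_on_add)
qed

lemma Ck_on_scaleR:
  fixes a :: "'a::real_normed_vector \<Rightarrow> real"
  assumes "open U"
  shows "Ck_on k U a \<Longrightarrow> Ck_on k U g \<Longrightarrow> Ck_on k U (\<lambda>x. a x *\<^sub>R g x)"
proof (induction k arbitrary: a g)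
  case 0
  then show ?case by (simp add: continuous_on_scaleR)
next
  case (Suc k)
  have da: "a differentiable_on U" and dg: "g differentiable_on U"
    using Suc.prems by simp_all
  have "Ck_on k U (\<lambda>x. frechet_derivative (\<lambda>x. a x *\<^sub>R g x) (at x) v)" for v
  proof (rule Ck_on_cong[OF assms])
    show "Ck_on k U (\<lambda>x. a x *\<^sub>R frechet_derivative g (at x) v + frechet_derivative a (at x) v *\<^sub>R g x)"
      using Suc.IH Suc.prems Ck_on_SucD[of k U a] Ck_on_SucD[of k U g]
      by (simp add: Ck_on_add[OF assms])
    fix x assume "x \<in> U"
    then have "a differentiable at x" "g differentiable at x"
      using da dg assms by (auto simp: differentiable_on_eq_differentiable_at)
    then have "((\<lambda>x. a x *\<^sub>R g x) has_derivative
        (\<lambda>v. a x *\<^sub>R frechet_derivative g (at x) v + frechet_derivative a (at x) v *\<^sub>R g x)) (at x)"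
      by (intro has_derivative_scaleR) (auto simp: frechet_derivative_works)
    then show "a x *\<^sub>R frechet_derivative g (at x) v + frechet_derivative a (at x) v *\<^sub>R g x
        = frechet_derivative (\<lambda>x. a x *\<^sub>R g x) (at x) v"
      using frechet_derivative_at by metis
  qed
  then show ?case using da dg by (simp add: differentiable_on_scaleR)
qed

lemma smooth_on_const: "smooth_on U (\<lambda>x. c)"
  by (simp add: smooth_on_def Ck_on_const)

lemma smooth_on_bounded_linear: "bounded_linear L \<Longrightarrow> smooth_on U L"
  by (simp add: smooth_on_def Ck_on_bounded_linear)

lemma smooth_on_add: "open U \<Longrightarrow> smooth_on U f \<Longrightarrow> smooth_on U g \<Longrightarrow> smooth_on U (\<lambda>x. f x + g x)"
  by (simp add: smooth_on_def Ck_on_add)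

lemma smooth_on_scaleR:
  "open U \<Longrightarrow> smooth_on U a \<Longrightarrow> smooth_on U g \<Longrightarrow> smooth_on U (\<lambda>x. a x *\<^sub>R g x)"
  by (simp add: smooth_on_def Ck_on_scaleR)

lemma smooth_on_diff: "open U \<Longrightarrow> smooth_on U f \<Longrightarrow> smooth_on U g \<Longrightarrow> smooth_on U (\<lambda>x. f x - g x)"
  using smooth_on_add[of U f "\<lambda>x. (-1) *\<^sub>R g x"] smooth_on_scaleR[of U "\<lambda>x. -1" g]
  by (simp add: smooth_on_const)

lemma smooth_on_sum:
  assumes "open U" and "finite S" and "\<And>i. i \<in> S \<Longrightarrow> smooth_on U (f i)"
  shows "smooth_on U (\<lambda>x. \<Sum>i\<in>S. f i x)"
  using assms(2,3) by (induction S rule: finite_induct) (simp_all add: smooth_on_const smooth_on_add[OF assms(1)])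

lemma smooth_on_frechet_derivative:
  "smooth_on U f \<Longrightarrow> smooth_on U (\<lambda>x. frechet_derivative f (at x) v)"
  unfolding smooth_on_def by (metis Ck_on.simps(2))

lemma smooth_on_has_derivative:
  assumes "open U" and "smooth_on U f" and "x \<in> U"
  shows "(f has_derivative frechet_derivative f (at x)) (at x)"
proof -
  have "Ck_on (Suc 0) U f" using assms(2) by (simp only: smooth_on_def)
  then show ?thesis
    using assms by (simp add: differentiable_on_eq_differentiable_at frechet_derivative_works)
qed

lemma smooth_on_pdqt: "smooth_on V \<xi> \<Longrightarrow> smooth_on V (pdqt \<xi> j)"
  by (simp add: pdqt_def[abs_def] smooth_on_frechet_derivative)

lemma smooth_on_dyn_conn_q: "open V \<Longrightarrow> smooth_on V \<xi> \<Longrightarrow> smooth_on V (dyn_conn_q \<xi> j)"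
  unfolding dyn_conn_q_def[abs_def]
  by (intro smooth_on_scaleR smooth_on_const smooth_on_pdqt)

lemma smooth_on_dyn_conn_t:
  fixes \<xi> :: "real \<times> (real^'n) \<times> (real^'n) \<Rightarrow> real^'n"
  assumes "open V" and "smooth_on V \<xi>"
  shows "smooth_on V (dyn_conn_t \<xi>)"
proof -
  have "bounded_linear (\<lambda>x::real \<times> (real^'n) \<times> (real^'n). snd (snd x) $ j)" for j
    by (intro bounded_linear_compose[OF bounded_linear_vec_nth]
        bounded_linear_compose[OF bounded_linear_snd] bounded_linear_snd)
  then show ?thesis
    unfolding dyn_conn_t_def[abs_def] using assms
    by (intro smooth_on_diff smooth_on_scaleR smooth_on_sum smooth_on_const smooth_on_pdqt)
      (simp_all add: smooth_on_bounded_linear)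
qed

section \<open>Symmetry of second derivatives\<close>

definition second_frechet ::
    "('a::real_normed_vector \<Rightarrow> 'b::real_normed_vector) \<Rightarrow> 'a \<Rightarrow> 'a \<Rightarrow> 'a \<Rightarrow> 'b" where
  "second_frechet f p k = frechet_derivative (\<lambda>y. frechet_derivative f (at y) k) (at p)"

lemma mvt_inner_segment:
  fixes g :: "'a::real_normed_vector \<Rightarrow> 'b::real_inner"
  assumes "s > 0"
    and dg: "\<And>t. t \<in> {0..s} \<Longrightarrow> (g has_derivative G (q + t *\<^sub>R h)) (at (q + t *\<^sub>R h))"
  shows "\<exists>t\<in>{0..s}. (g (q + s *\<^sub>R h) - g q) \<bullet> e = s * (G (q + t *\<^sub>R h) h \<bullet> e)"
proof -
  have "((\<lambda>t. g (q + t *\<^sub>R h) \<bullet> e) has_derivative (\<lambda>d. G (q + t *\<^sub>R h) (d *\<^sub>R h) \<bullet> e))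
      (at t within {0..s})" if "0 \<le> t" "t \<le> s" for t
  proof -
    have "((\<lambda>t. q + t *\<^sub>R h) has_derivative (\<lambda>d. d *\<^sub>R h)) (at t)"
      by (auto intro!: derivative_eq_intros)
    from diff_chain_at[OF this dg] that
    have "((\<lambda>t. g (q + t *\<^sub>R h)) has_derivative (\<lambda>d. G (q + t *\<^sub>R h) (d *\<^sub>R h))) (at t)"
      by (simp add: o_def)
    then show ?thesis
      by (rule has_derivative_at_withinI[OF has_derivative_inner_left])
  qed
  from mvt_simple[OF assms(1) this] obtain t where t: "t \<in> {0<..<s}"
    and eq: "g (q + s *\<^sub>R h) \<bullet> e - g (q + 0 *\<^sub>R h) \<bullet> e = G (q + t *\<^sub>R h) ((s - 0) *\<^sub>R h) \<bullet> e"
    by blast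
  have "linear (G (q + t *\<^sub>R h))"
    using t by (intro has_derivative_linear[OF dg]) simp
  then have "(g (q + s *\<^sub>R h) - g q) \<bullet> e = s * (G (q + t *\<^sub>R h) h \<bullet> e)"
    using eq by (simp add: linear_scale inner_diff_left)
  then show ?thesis using t by auto
qed

lemma second_difference_mvt:
  fixes f :: "'a::real_normed_vector \<Rightarrow> 'b::real_inner"
  assumes df: "\<And>y. y \<in> S \<Longrightarrow> (f has_derivative Df y) (at y)"
    and d2: "\<And>y. y \<in> S \<Longrightarrow> ((\<lambda>y. Df y h) has_derivative D2 y) (at y)"
    and "s > 0"
    and box: "\<And>a b. a \<in> {0..s} \<Longrightarrow> b \<in> {0..s} \<Longrightarrow> p + a *\<^sub>R h + b *\<^sub>R k \<in> S"
  shows "\<exists>a\<in>{0..s}. \<exists>b\<in>{0..s}.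
    (f (p + s *\<^sub>R h + s *\<^sub>R k) - f (p + s *\<^sub>R h) - f (p + s *\<^sub>R k) + f p) \<bullet> e
      = s * s * (D2 (p + a *\<^sub>R h + b *\<^sub>R k) k \<bullet> e)"
proof -
  have "((\<lambda>y. f (y + s *\<^sub>R k) - f y) has_derivative (\<lambda>d. Df (y + s *\<^sub>R k) d - Df y d)) (at y)"
    if "y = p + a *\<^sub>R h" "a \<in> {0..s}" for y a
  proof -
    have "y + s *\<^sub>R k \<in> S" "y \<in> S"
      using box[OF that(2), of s] box[OF that(2), of 0] \<open>s > 0\<close> that(1) by auto
    then show ?thesis
      using diff_chain_at[OF has_derivative_add_const[OF has_derivative_ident] df, of y "s *\<^sub>R k"]
      by (intro has_derivative_diff) (auto simp: o_def df)
  qed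
  then obtain a where a: "a \<in> {0..s}" and eq_a:
    "((f (p + s *\<^sub>R h + s *\<^sub>R k) - f (p + s *\<^sub>R h)) - (f (p + s *\<^sub>R k) - f p)) \<bullet> e
      = s * ((Df (p + a *\<^sub>R h + s *\<^sub>R k) h - Df (p + a *\<^sub>R h) h) \<bullet> e)"
    using mvt_inner_segment[OF \<open>s > 0\<close>, of "\<lambda>y. f (y + s *\<^sub>R k) - f y"
        "\<lambda>y d. Df (y + s *\<^sub>R k) d - Df y d" p h e]
    by auto
  obtain b where b: "b \<in> {0..s}" and eq_b:
    "(Df (p + a *\<^sub>R h + s *\<^sub>R k) h - Df (p + a *\<^sub>R h) h) \<bullet> e
      = s * (D2 (p + a *\<^sub>R h + b *\<^sub>R k) k \<bullet> e)"
    using mvt_inner_segment[OF \<open>s > 0\<close>, of "\<lambda>y. Df y h" D2 "p + a *\<^sub>R h" k e] d2 box[OF a]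
    by auto
  have "(f (p + s *\<^sub>R h + s *\<^sub>R k) - f (p + s *\<^sub>R h) - f (p + s *\<^sub>R k) + f p) \<bullet> e
      = ((f (p + s *\<^sub>R h + s *\<^sub>R k) - f (p + s *\<^sub>R h)) - (f (p + s *\<^sub>R k) - f p)) \<bullet> e"
    by (simp add: algebra_simps)
  also have "\<dots> = s * s * (D2 (p + a *\<^sub>R h + b *\<^sub>R k) k \<bullet> e)"
    unfolding eq_a eq_b by simp
  finally show ?thesis
    using a b by blast
qed

lemma second_derivatives_agree_near:
  fixes f :: "'a::real_normed_vector \<Rightarrow> 'b::real_inner"
  assumes "open S" and "p \<in> S" and "d > 0"
    and df: "\<And>y. y \<in> S \<Longrightarrow> (f has_derivative Df y) (at y)"
    and d2: "\<And>y w. y \<in> S \<Longrightarrow> ((\<lambda>y. Df y w) has_derivative D2 w y) (at y)"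
  shows "\<exists>y1\<in>S \<inter> ball p d. \<exists>y2\<in>S \<inter> ball p d. D2 h y1 k \<bullet> e = D2 k y2 h \<bullet> e"
proof -
  obtain r where "r > 0" and r: "ball p r \<subseteq> S"
    using assms(1,2) open_contains_ball by blast
  define s where "s = min d r / (norm h + norm k + 1)"
  have "s > 0" using \<open>r > 0\<close> \<open>d > 0\<close> by (simp add: s_def add_nonneg_pos)
  have near: "p + a *\<^sub>R h + b *\<^sub>R k \<in> S \<inter> ball p d" if "a \<in> {0..s}" "b \<in> {0..s}" for a b
  proof -
    have "norm (a *\<^sub>R h + b *\<^sub>R k) \<le> s * norm h + s * norm k"
      using that norm_triangle_ineq[of "a *\<^sub>R h" "b *\<^sub>R k"]
        mult_right_mono[of a s "norm h"] mult_right_mono[of b s "norm k"] by auto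
    also have "\<dots> < s * (norm h + norm k + 1)"
      using \<open>s > 0\<close> by (simp add: algebra_simps)
    also have "\<dots> = min d r"
    proof -
      have "norm h + norm k + 1 \<noteq> 0"
        using norm_ge_zero[of h] norm_ge_zero[of k] by linarith
      then show ?thesis unfolding s_def by simp
    qed
    finally have "dist (p + a *\<^sub>R h + b *\<^sub>R k) p < min d r"
      by (simp add: dist_norm)
    then show ?thesis
      using r by (auto simp: dist_commute)
  qed
  then have near': "p + a *\<^sub>R k + b *\<^sub>R h \<in> S \<inter> ball p d" if "a \<in> {0..s}" "b \<in> {0..s}" for a b
    using that by (metis add.assoc add.commute)
  obtain a1 b1 where "a1 \<in> {0..s}" "b1 \<in> {0..s}" and eq1:
    "(f (p + s *\<^sub>R h + s *\<^sub>R k) - f (p + s *\<^sub>R h) - f (p + s *\<^sub>R k) + f p) \<bullet> e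
      = s * s * (D2 h (p + a1 *\<^sub>R h + b1 *\<^sub>R k) k \<bullet> e)"
    using second_difference_mvt[of S f Df h "D2 h" s p k e] df d2 \<open>s > 0\<close> near by blast
  moreover obtain a2 b2 where "a2 \<in> {0..s}" "b2 \<in> {0..s}" and eq2:
    "(f (p + s *\<^sub>R k + s *\<^sub>R h) - f (p + s *\<^sub>R k) - f (p + s *\<^sub>R h) + f p) \<bullet> e
      = s * s * (D2 k (p + a2 *\<^sub>R k + b2 *\<^sub>R h) h \<bullet> e)"
    using second_difference_mvt[of S f Df k "D2 k" s p h e] df d2 \<open>s > 0\<close> near' by blast
  moreover have "D2 h (p + a1 *\<^sub>R h + b1 *\<^sub>R k) k \<bullet> e = D2 k (p + a2 *\<^sub>R k + b2 *\<^sub>R h) h \<bullet> e"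
    using eq1 eq2 \<open>s > 0\<close> by (simp add: algebra_simps)
  ultimately show ?thesis
    using near near' by blast
qed

lemma second_frechet_symmetric:
  fixes f :: "'a::real_normed_vector \<Rightarrow> 'b::real_inner"
  assumes "open S" and C2: "Ck_on 2 S f" and "p \<in> S"
  shows "second_frechet f p k h = second_frechet f p h k"
proof (rule ccontr)
  define Df where "Df y = frechet_derivative f (at y)" for y
  define D2 where "D2 w y = frechet_derivative (\<lambda>y. Df y w) (at y)" for w y
  have has_Df: "(f has_derivative Df y) (at y)"
    and has_D2: "((\<lambda>y. Df y w) has_derivative D2 w y) (at y)" if "y \<in> S" for y w
    using C2 that \<open>open S\<close>
    by (auto simp: numeral_2_eq_2 Df_def D2_def differentiable_on_eq_differentiable_at
        frechet_derivative_works)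
  have cont: "continuous_on S (\<lambda>y. D2 w y z \<bullet> e)" for w z e
    using C2 by (auto simp: numeral_2_eq_2 Df_def D2_def intro!: continuous_intros)
  define e where "e = D2 k p h - D2 h p k"
  assume "second_frechet f p k h \<noteq> second_frechet f p h k"
  then have "e \<bullet> e > 0" by (simp add: e_def D2_def Df_def second_frechet_def)
  then obtain d1 d2 where "d1 > 0" "d2 > 0"
    and near1: "\<And>y. y \<in> S \<Longrightarrow> dist y p < d1 \<Longrightarrow> \<bar>D2 k y h \<bullet> e - D2 k p h \<bullet> e\<bar> < e \<bullet> e / 2"
    and near2: "\<And>y. y \<in> S \<Longrightarrow> dist y p < d2 \<Longrightarrow> \<bar>D2 h y k \<bullet> e - D2 h p k \<bullet> e\<bar> < e \<bullet> e / 2"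
    using cont \<open>p \<in> S\<close> unfolding continuous_on_iff dist_real_def
    by (metis half_gt_zero)
  obtain y1 y2 where "y1 \<in> S \<inter> ball p (min d1 d2)" "y2 \<in> S \<inter> ball p (min d1 d2)"
    and "D2 h y1 k \<bullet> e = D2 k y2 h \<bullet> e"
    using second_derivatives_agree_near[OF \<open>open S\<close> \<open>p \<in> S\<close>, of "min d1 d2" f Df D2 h k e]
      \<open>d1 > 0\<close> \<open>d2 > 0\<close> has_Df has_D2 by auto
  moreover have "D2 k p h \<bullet> e - D2 h p k \<bullet> e = e \<bullet> e"
    by (simp add: e_def inner_diff_left)
  ultimately show False
    using near1[of y2] near2[of y1] by (auto simp: dist_commute abs_if split: if_splits)
qed

section \<open>Coordinates on the jet bundle\<close>

lemma linear_vec_axis_expansion: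
  fixes L :: "real^'n \<Rightarrow> 'b::real_vector"
  assumes "linear L"
  shows "(\<Sum>j\<in>UNIV. w $ j *\<^sub>R L (axis j 1)) = L w"
proof -
  have "L w = L (\<Sum>j\<in>UNIV. w $ j *\<^sub>R axis j 1)"
    using basis_expansion[of w] by (simp add: scalar_mult_eq_scaleR)
  then show ?thesis
    by (simp add: linear_sum[OF assms] linear_scale[OF assms])
qed

lemma linear_euclidean_expansion:
  fixes L :: "'k::euclidean_space \<Rightarrow> 'b::real_vector"
  assumes "linear L"
  shows "(\<Sum>b\<in>Basis. (k \<bullet> b) *\<^sub>R L b) = L k"
proof -
  have "L k = L (\<Sum>b\<in>Basis. (k \<bullet> b) *\<^sub>R b)"
    by (simp add: euclidean_representation)
  then show ?thesis
    by (simp add: linear_sum[OF assms] linear_scale[OF assms])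
qed

lemma linear_Pair_zero: "linear L \<Longrightarrow> linear (\<lambda>z. L (0, z))"
  by (rule linearI) (simp_all flip: linear_add linear_scale)

definition jet_base :: "real \<times> (real^'n) \<times> (real^'n) \<Rightarrow> real \<times> (real^'n)" where
  "jet_base x = (fst x, fst (snd x))"

lemma bounded_linear_jet_base: "bounded_linear jet_base"
  unfolding jet_base_def[abs_def]
  by (intro bounded_linear_Pair bounded_linear_fst
      bounded_linear_compose[OF bounded_linear_fst bounded_linear_snd])

lemma mem_jet_dom [simp]: "(t, q, v) \<in> jet_dom U \<longleftrightarrow> (t, q) \<in> U"
  by (simp add: jet_dom_def)

lemma open_jet_dom: "open U \<Longrightarrow> open (jet_dom U)"
proof -
  assume "open U"
  moreover have "jet_dom U = jet_base -` U"
    by (auto simp: jet_dom_def jet_base_def)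
  ultimately show ?thesis
    using bounded_linear_jet_base linear_continuous_on open_vimage by metis
qed

lemma jet_prolong_eq:
  "jet_prolong \<Phi> x = (fst x, \<Phi> (jet_base x), frechet_derivative \<Phi> (at (jet_base x)) (1, snd (snd x)))"
  by (simp add: jet_prolong_def jet_base_def split: prod.split)

lemma jet_prolong_apply:
  "jet_prolong \<Phi> (t, q, v) = (t, \<Phi> (t, q), frechet_derivative \<Phi> (at (t, q)) (1, v))"
  by (simp add: jet_prolong_def)

lemma hlift_dyn_conn:
  fixes \<zeta> :: "real \<times> (real^'n) \<times> (real^'n) \<Rightarrow> real^'n"
  assumes "linear (frechet_derivative \<zeta> (at y))"
  shows "hlift (dyn_conn_t \<zeta>) (dyn_conn_q \<zeta>) y (u0, w)
       = (u0, w, u0 *\<^sub>R \<zeta> y + (1/2) *\<^sub>R frechet_derivative \<zeta> (at y) (0, 0, w - u0 *\<^sub>R snd (snd y)))"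
proof -
  define D where "D z = frechet_derivative \<zeta> (at y) (0, 0, z)" for z
  have "linear D"
    unfolding D_def[abs_def] using linear_Pair_zero[OF linear_Pair_zero[OF assms]] .
  then have pdqt_sum: "(\<Sum>j\<in>UNIV. z $ j *\<^sub>R pdqt \<zeta> j y) = D z" for z
    using linear_vec_axis_expansion[of D z] by (simp add: pdqt_def D_def)
  have q_sum: "(\<Sum>j\<in>UNIV. w $ j *\<^sub>R dyn_conn_q \<zeta> j y) = (1/2) *\<^sub>R D w"
    by (simp add: dyn_conn_q_def scaleR_sum_right pdqt_sum[symmetric] mult.commute)
  have t_eq: "dyn_conn_t \<zeta> y = \<zeta> y - (1/2) *\<^sub>R D (snd (snd y))"
    by (simp add: dyn_conn_t_def pdqt_sum)
  have D_diff: "D (w - u0 *\<^sub>R snd (snd y)) = D w - u0 *\<^sub>R D (snd (snd y))"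
    by (simp add: linear_diff[OF \<open>linear D\<close>] linear_scale[OF \<open>linear D\<close>])
  show ?thesis
    unfolding hlift_def fst_conv snd_conv q_sum t_eq D_def[symmetric] D_diff
    by (simp add: algebra_simps)
qed

lemma has_derivative_apply_linear_family:
  fixes A :: "'a::real_normed_vector \<Rightarrow> 'k::euclidean_space \<Rightarrow> 'b::real_normed_vector"
  assumes "open S" and "x \<in> S"
    and lin: "\<And>y. y \<in> S \<Longrightarrow> linear (A y)"
    and dA: "\<And>k. ((\<lambda>y. A y k) has_derivative B k) (at x)"
    and linB: "\<And>d. linear (\<lambda>k. B k d)"
    and d\<kappa>: "(\<kappa> has_derivative K) (at x)"
  shows "((\<lambda>y. A y (\<kappa> y)) has_derivative (\<lambda>d. B (\<kappa> x) d + A x (K d))) (at x)"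
proof -
  have "((\<lambda>y. \<Sum>b\<in>Basis. (\<kappa> y \<bullet> b) *\<^sub>R A y b) has_derivative
      (\<lambda>d. \<Sum>b\<in>Basis. (\<kappa> x \<bullet> b) *\<^sub>R B b d + (K d \<bullet> b) *\<^sub>R A x b)) (at x)"
    by (intro has_derivative_sum has_derivative_scaleR has_derivative_inner_left d\<kappa> dA)
  moreover have "(\<Sum>b\<in>Basis. (\<kappa> x \<bullet> b) *\<^sub>R B b d + (K d \<bullet> b) *\<^sub>R A x b) = B (\<kappa> x) d + A x (K d)" for d
    using linear_euclidean_expansion[OF linB] linear_euclidean_expansion[OF lin[OF \<open>x \<in> S\<close>]]
    by (simp add: sum.distrib)
  moreover have "(\<Sum>b\<in>Basis. (\<kappa> y \<bullet> b) *\<^sub>R A y b) = A y (\<kappa> y)" if "y \<in> S" for y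
    using linear_euclidean_expansion[OF lin[OF that]] .
  ultimately show ?thesis
    using has_derivative_transform_within_open[OF _ \<open>open S\<close> \<open>x \<in> S\<close>] by force
qed

lemma bilinear_symmetric_line:
  assumes "bilinear B" and "\<And>k h. B k h = B h k"
  shows "B (a + s *\<^sub>R b) (a + s *\<^sub>R b) = B a a + s *\<^sub>R (2 *\<^sub>R B a b) + (s * s) *\<^sub>R B b b"
proof -
  have "B (a + s *\<^sub>R b) (a + s *\<^sub>R b) = B a a + s *\<^sub>R B a b + s *\<^sub>R B b a + (s * s) *\<^sub>R B b b"
    by (simp only: bilinear_ladd[OF assms(1)] bilinear_radd[OF assms(1)] bilinear_lmul[OF assms(1)]
        bilinear_rmul[OF assms(1)]) (simp add: algebra_simps)
  then show ?thesis
    using assms(2)[of b a] by (simp add: scaleR_2 algebra_simps)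
qed

lemma has_derivative_along_line:
  assumes "(f has_derivative f') (at p)"
  shows "((\<lambda>s. f (p + s *\<^sub>R d)) has_derivative (\<lambda>r. f' (r *\<^sub>R d))) (at 0)"
proof -
  have "((\<lambda>s. p + s *\<^sub>R d) has_derivative (\<lambda>r. r *\<^sub>R d)) (at 0)"
    by (auto intro!: derivative_eq_intros)
  then show ?thesis
    using diff_chain_at[of "\<lambda>s. p + s *\<^sub>R d" _ 0 f f'] assms by (simp add: o_def)
qed

section \<open>Change of bundle chart\<close>

context
  fixes \<Phi> :: "real \<times> (real^'n) \<Rightarrow> real^'n" and U :: "(real \<times> (real^'n)) set"
  assumes open_U: "open U" and smooth_\<Phi>: "smooth_on U \<Phi>"
begin

lemma chart_has_derivative: "p \<in> U \<Longrightarrow> (\<Phi> has_derivative frechet_derivative \<Phi> (at p)) (at p)"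
  by (rule smooth_on_has_derivative[OF open_U smooth_\<Phi>])

lemma chart_derivative_has_derivative:
  "p \<in> U \<Longrightarrow> ((\<lambda>p. frechet_derivative \<Phi> (at p) k) has_derivative second_frechet \<Phi> p k) (at p)"
  unfolding second_frechet_def
  by (rule smooth_on_has_derivative[OF open_U smooth_on_frechet_derivative[OF smooth_\<Phi>]])

lemma linear_chart_derivative: "p \<in> U \<Longrightarrow> linear (frechet_derivative \<Phi> (at p))"
  using chart_has_derivative has_derivative_linear by blast

lemma bilinear_second_frechet:
  assumes "p \<in> U"
  shows "bilinear (second_frechet \<Phi> p)"
  unfolding bilinear_def
proof (intro allI conjI)
  show "linear (second_frechet \<Phi> p k)" for k
    using chart_derivative_has_derivative[OF assms] has_derivative_linear by blast
  fix h
  have D: "((\<lambda>p. frechet_derivative \<Phi> (at p) k) has_derivative second_frechet \<Phi> p k) (at p)" for k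
    by (rule chart_derivative_has_derivative[OF assms])
  show "linear (\<lambda>k. second_frechet \<Phi> p k h)"
  proof (rule linearI)
    fix k1 k2
    have "((\<lambda>p. frechet_derivative \<Phi> (at p) (k1 + k2)) has_derivative
        (\<lambda>h. second_frechet \<Phi> p k1 h + second_frechet \<Phi> p k2 h)) (at p)"
      by (rule has_derivative_transform_within_open[OF has_derivative_add[OF D D] open_U assms])
        (simp add: linear_add[OF linear_chart_derivative])
    from has_derivative_unique[OF D this]
    show "second_frechet \<Phi> p (k1 + k2) h = second_frechet \<Phi> p k1 h + second_frechet \<Phi> p k2 h"
      by metis
  next
    fix c :: real and k
    have "((\<lambda>p. frechet_derivative \<Phi> (at p) (c *\<^sub>R k)) has_derivative
        (\<lambda>h. c *\<^sub>R second_frechet \<Phi> p k h)) (at p)"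
      by (rule has_derivative_transform_within_open[OF has_derivative_scaleR_right[OF D] open_U assms])
        (simp add: linear_scale[OF linear_chart_derivative])
    from has_derivative_unique[OF D this]
    show "second_frechet \<Phi> p (c *\<^sub>R k) h = c *\<^sub>R second_frechet \<Phi> p k h"
      by metis
  qed
qed

lemma second_frechet_chart_symmetric: "p \<in> U \<Longrightarrow> second_frechet \<Phi> p k h = second_frechet \<Phi> p h k"
  using smooth_\<Phi> by (intro second_frechet_symmetric[OF open_U]) (simp_all add: smooth_on_def)

lemma has_derivative_jet_prolong:
  assumes "x \<in> jet_dom U"
  shows "(jet_prolong \<Phi> has_derivative (\<lambda>d. (fst d, frechet_derivative \<Phi> (at (jet_base x)) (jet_base d),
      second_frechet \<Phi> (jet_base x) (1, snd (snd x)) (jet_base d)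
        + frechet_derivative \<Phi> (at (jet_base x)) (0, snd (snd d))))) (at x)"
proof -
  have base_in: "jet_base y \<in> U" if "y \<in> jet_dom U" for y
    using that by (auto simp: jet_dom_def jet_base_def)
  have d_base: "(jet_base has_derivative jet_base) (at x)"
    by (rule bounded_linear_imp_has_derivative[OF bounded_linear_jet_base])
  have "((\<lambda>y. frechet_derivative \<Phi> (at (jet_base y)) (1, snd (snd y))) has_derivative
      (\<lambda>d. second_frechet \<Phi> (jet_base x) (1, snd (snd x)) (jet_base d)
        + frechet_derivative \<Phi> (at (jet_base x)) (0, snd (snd d)))) (at x)"
  proof (rule has_derivative_apply_linear_family[where A = "\<lambda>y. frechet_derivative \<Phi> (at (jet_base y))"
        and B = "\<lambda>k d. second_frechet \<Phi> (jet_base x) k (jet_base d)"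
        and \<kappa> = "\<lambda>y. (1, snd (snd y))" and K = "\<lambda>d. (0, snd (snd d))",
        OF open_jet_dom[OF open_U] assms])
    show "linear (frechet_derivative \<Phi> (at (jet_base y)))" if "y \<in> jet_dom U" for y
      using linear_chart_derivative base_in[OF that] .
    show "((\<lambda>y. frechet_derivative \<Phi> (at (jet_base y)) k) has_derivative
        (\<lambda>d. second_frechet \<Phi> (jet_base x) k (jet_base d))) (at x)" for k
      using diff_chain_at[OF d_base chart_derivative_has_derivative[OF base_in[OF assms]]]
      by (simp add: o_def)
    show "linear (\<lambda>k. second_frechet \<Phi> (jet_base x) k (jet_base d))" for d
      using bilinear_second_frechet[OF base_in[OF assms]] unfolding bilinear_def by blast
    show "((\<lambda>y. (1::real, snd (snd y))) has_derivative (\<lambda>d. (0, snd (snd d)))) (at x)"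
      by (auto intro!: derivative_eq_intros)
  qed
  moreover have "((\<lambda>y. \<Phi> (jet_base y)) has_derivative
      (\<lambda>d. frechet_derivative \<Phi> (at (jet_base x)) (jet_base d))) (at x)"
    using diff_chain_at[OF d_base chart_has_derivative[OF base_in[OF assms]]] by (simp add: o_def)
  moreover have "jet_prolong \<Phi> = (\<lambda>y. (fst y, \<Phi> (jet_base y),
      frechet_derivative \<Phi> (at (jet_base y)) (1, snd (snd y))))"
    using jet_prolong_eq by blast
  ultimately show ?thesis
    by (simp add: has_derivative_Pair has_derivative_fst[OF has_derivative_ident])
qed

context
  fixes U' :: "(real \<times> (real^'n)) set" and \<xi> \<xi>' :: "real \<times> (real^'n) \<times> (real^'n) \<Rightarrow> real^'n"
  assumes open_U': "open U'"
    and maps_into: "\<forall>p\<in>U. (fst p, \<Phi> p) \<in> U'"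
    and smooth_\<xi>: "smooth_on (jet_dom U) \<xi>" and smooth_\<xi>': "smooth_on (jet_dom U') \<xi>'"
    and so_transform: "\<forall>x\<in>jet_dom U. frechet_derivative (jet_prolong \<Phi>) (at x) (so_vf \<xi> x)
                        = so_vf \<xi>' (jet_prolong \<Phi> x)"
begin

lemma jet_prolong_in_jet_dom: "(t, q, v) \<in> jet_dom U \<Longrightarrow> jet_prolong \<Phi> (t, q, v) \<in> jet_dom U'"
  using maps_into by (force simp: jet_prolong_apply)

lemma frechet_derivative_jet_prolong:
  assumes "(t, q, v) \<in> jet_dom U"
  shows "frechet_derivative (jet_prolong \<Phi>) (at (t, q, v)) (d0, dq, dv)
    = (d0, frechet_derivative \<Phi> (at (t, q)) (d0, dq),
       second_frechet \<Phi> (t, q) (1, v) (d0, dq) + frechet_derivative \<Phi> (at (t, q)) (0, dv))"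
  using frechet_derivative_at[OF has_derivative_jet_prolong[OF assms], symmetric]
  by (simp add: jet_base_def)

lemma transformed_dynamic_equation:
  assumes "(t, q, v) \<in> jet_dom U"
  shows "second_frechet \<Phi> (t, q) (1, v) (1, v) + frechet_derivative \<Phi> (at (t, q)) (0, \<xi> (t, q, v))
    = \<xi>' (t, \<Phi> (t, q), frechet_derivative \<Phi> (at (t, q)) (1, v))"
proof -
  have "frechet_derivative (jet_prolong \<Phi>) (at (t, q, v)) (so_vf \<xi> (t, q, v))
      = so_vf \<xi>' (jet_prolong \<Phi> (t, q, v))"
    using so_transform assms by blast
  then show ?thesis
    by (simp add: so_vf_def frechet_derivative_jet_prolong[OF assms] jet_prolong_apply)
qed

lemma transformed_dynamic_equation_along_fibre:
  assumes "(t, q, v) \<in> jet_dom U"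
  shows "second_frechet \<Phi> (t, q) (1, v) (1, v) + s *\<^sub>R (2 *\<^sub>R second_frechet \<Phi> (t, q) (1, v) (0, e))
      + (s * s) *\<^sub>R second_frechet \<Phi> (t, q) (0, e) (0, e)
      + frechet_derivative \<Phi> (at (t, q)) (0, \<xi> (t, q, v + s *\<^sub>R e))
    = \<xi>' (t, \<Phi> (t, q), frechet_derivative \<Phi> (at (t, q)) (1, v) + s *\<^sub>R frechet_derivative \<Phi> (at (t, q)) (0, e))"
proof -
  have tq: "(t, q) \<in> U" using assms by simp
  have "frechet_derivative \<Phi> (at (t, q)) (1, v + s *\<^sub>R e)
      = frechet_derivative \<Phi> (at (t, q)) ((1, v) + s *\<^sub>R (0, e))"
    by simp
  also have "\<dots> = frechet_derivative \<Phi> (at (t, q)) (1, v) + s *\<^sub>R frechet_derivative \<Phi> (at (t, q)) (0, e)"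
    using linear_chart_derivative[OF tq] by (simp only: linear_add linear_scale)
  finally show ?thesis
    using transformed_dynamic_equation[of t q "v + s *\<^sub>R e"] tq
      bilinear_symmetric_line[OF bilinear_second_frechet[OF tq] second_frechet_chart_symmetric[OF tq],
        of "(1, v)" s "(0, e)"]
    by simp
qed

lemma fibre_derivative_transformed_dynamic_equation:
  assumes "(t, q, v) \<in> jet_dom U"
  shows "2 *\<^sub>R second_frechet \<Phi> (t, q) (1, v) (0, e)
      + frechet_derivative \<Phi> (at (t, q)) (0, frechet_derivative \<xi> (at (t, q, v)) (0, 0, e))
    = frechet_derivative \<xi>' (at (t, \<Phi> (t, q), frechet_derivative \<Phi> (at (t, q)) (1, v)))
        (0, 0, frechet_derivative \<Phi> (at (t, q)) (0, e))"
proof -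
  define A where "A = frechet_derivative \<Phi> (at (t, q))"
  define B where "B = second_frechet \<Phi> (t, q)"
  have "bounded_linear (\<lambda>z. A (0, z))"
    unfolding A_def linear_conv_bounded_linear[symmetric]
    using assms by (intro linear_Pair_zero linear_chart_derivative) simp
  moreover have "((\<lambda>s. \<xi> ((t, q, v) + s *\<^sub>R (0, 0, e))) has_derivative
      (\<lambda>r. frechet_derivative \<xi> (at (t, q, v)) (r *\<^sub>R (0, 0, e)))) (at 0)"
    by (rule has_derivative_along_line[OF smooth_on_has_derivative[OF open_jet_dom[OF open_U] smooth_\<xi> assms]])
  ultimately have "((\<lambda>s. B (1, v) (1, v) + s *\<^sub>R (2 *\<^sub>R B (1, v) (0, e)) + (s * s) *\<^sub>R B (0, e) (0, e)
      + A (0, \<xi> (t, q, v + s *\<^sub>R e))) has_derivative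
      (\<lambda>r. r *\<^sub>R (2 *\<^sub>R B (1, v) (0, e)) + A (0, frechet_derivative \<xi> (at (t, q, v)) (0, 0, r *\<^sub>R e))))
      (at 0)"
    by (auto dest: bounded_linear.has_derivative intro!: derivative_eq_intros)
  moreover have "((\<lambda>s. \<xi>' ((t, \<Phi> (t, q), A (1, v)) + s *\<^sub>R (0, 0, A (0, e)))) has_derivative
      (\<lambda>r. frechet_derivative \<xi>' (at (t, \<Phi> (t, q), A (1, v))) (r *\<^sub>R (0, 0, A (0, e))))) (at 0)"
    using jet_prolong_in_jet_dom[OF assms]
    by (intro has_derivative_along_line smooth_on_has_derivative[OF open_jet_dom[OF open_U'] smooth_\<xi>'])
      (simp add: jet_prolong_apply A_def)
  ultimately have "(\<lambda>r. r *\<^sub>R (2 *\<^sub>R B (1, v) (0, e)) + A (0, frechet_derivative \<xi> (at (t, q, v)) (0, 0, r *\<^sub>R e)))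
      = (\<lambda>r. frechet_derivative \<xi>' (at (t, \<Phi> (t, q), A (1, v))) (0, 0, r *\<^sub>R A (0, e)))"
    using has_derivative_unique transformed_dynamic_equation_along_fibre[OF assms]
    by (simp add: A_def B_def)
  from fun_cong[OF this, of 1] show ?thesis
    by (simp add: A_def B_def)
qed

lemma hlift_transform:
  assumes "x \<in> jet_dom U"
  shows "frechet_derivative (jet_prolong \<Phi>) (at x) (hlift (dyn_conn_t \<xi>) (dyn_conn_q \<xi>) x u)
    = hlift (dyn_conn_t \<xi>') (dyn_conn_q \<xi>') (jet_prolong \<Phi> x)
        (fst u, frechet_derivative \<Phi> (at (fst x, fst (snd x))) u)"
proof -
  obtain t q v where x: "x = (t, q, v)" by (cases x)
  obtain u0 w where u: "u = (u0, w)" by (cases u)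
  define A where "A = frechet_derivative \<Phi> (at (t, q))"
  define B where "B = second_frechet \<Phi> (t, q)"
  define e where "e = w - u0 *\<^sub>R v"
  have tq: "(t, q) \<in> U" using assms x by simp
  have lin_A: "linear A" and lin_A0: "linear (\<lambda>z. A (0, z))" and lin_B: "linear (B (1, v))"
    using linear_chart_derivative[OF tq] linear_Pair_zero bilinear_second_frechet[OF tq]
    by (auto simp: A_def B_def bilinear_def)
  have split: "(u0, w) = u0 *\<^sub>R (1, v) + (0::real, e)"
    by (simp add: e_def)
  have A_split: "A (u0, w) = u0 *\<^sub>R A (1, v) + A (0, e)"
    unfolding split by (simp only: linear_add[OF lin_A] linear_scale[OF lin_A])
  have B_split: "B (1, v) (u0, w) = u0 *\<^sub>R B (1, v) (1, v) + B (1, v) (0, e)"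
    unfolding split by (simp only: linear_add[OF lin_B] linear_scale[OF lin_B])
  have lin_D\<xi>: "linear (frechet_derivative \<xi> (at (t, q, v)))"
    using assms x smooth_on_has_derivative[OF open_jet_dom[OF open_U] smooth_\<xi>] has_derivative_linear
    by blast
  have lin_D\<xi>': "linear (frechet_derivative \<xi>' (at (jet_prolong \<Phi> (t, q, v))))"
    using jet_prolong_in_jet_dom[OF assms[unfolded x]] has_derivative_linear
      smooth_on_has_derivative[OF open_jet_dom[OF open_U'] smooth_\<xi>'] by blast
  have "frechet_derivative (jet_prolong \<Phi>) (at x) (hlift (dyn_conn_t \<xi>) (dyn_conn_q \<xi>) x u)
    = (u0, A (u0, w), u0 *\<^sub>R (B (1, v) (1, v) + A (0, \<xi> x))
        + (1/2) *\<^sub>R (2 *\<^sub>R B (1, v) (0, e) + A (0, frechet_derivative \<xi> (at x) (0, 0, e))))"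
    unfolding x u hlift_dyn_conn[OF lin_D\<xi>] frechet_derivative_jet_prolong[OF assms[unfolded x]]
    by (simp add: A_def[symmetric] B_def[symmetric] e_def[symmetric] B_split algebra_simps
        linear_add[OF lin_A0] linear_scale[OF lin_A0])
  also have "\<dots> = hlift (dyn_conn_t \<xi>') (dyn_conn_q \<xi>') (jet_prolong \<Phi> x)
        (fst u, frechet_derivative \<Phi> (at (fst x, fst (snd x))) u)"
    using transformed_dynamic_equation[OF assms[unfolded x]]
      fibre_derivative_transformed_dynamic_equation[OF assms[unfolded x], of e]
    unfolding x u hlift_dyn_conn[OF lin_D\<xi>']
    by (simp add: jet_prolong_apply A_def[symmetric] B_def[symmetric] A_split)
  finally show ?thesis .
qed

end

end

theorem proposition4:
  fixes \<Phi> :: "real \<times> (real^'n) \<Rightarrow> (real^'n)"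
    and U U' :: "(real \<times> (real^'n)) set"
    and \<xi> \<xi>' :: "real \<times> (real^'n) \<times> (real^'n) \<Rightarrow> (real^'n)"
  assumes "open U" and "open U'"
    and "smooth_on U \<Phi>"
    and "\<forall>p\<in>U. (fst p, \<Phi> p) \<in> U'"
    and "inj_on (\<lambda>p. (fst p, \<Phi> p)) U"
    and "\<forall>p\<in>U. bij (\<lambda>w. frechet_derivative \<Phi> (at p) (0, w))"
    and "smooth_on (jet_dom U) \<xi>"
    and "smooth_on (jet_dom U') \<xi>'"
    and "\<forall>x\<in>jet_dom U. frechet_derivative (jet_prolong \<Phi>) (at x) (so_vf \<xi> x)
                        = so_vf \<xi>' (jet_prolong \<Phi> x)"
  shows "smooth_on (jet_dom U) (dyn_conn_t \<xi>)
       \<and> (\<forall>j. smooth_on (jet_dom U) (dyn_conn_q \<xi> j))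
       \<and> (\<forall>x\<in>jet_dom U. \<forall>u.
            frechet_derivative (jet_prolong \<Phi>) (at x) (hlift (dyn_conn_t \<xi>) (dyn_conn_q \<xi>) x u)
          = hlift (dyn_conn_t \<xi>') (dyn_conn_q \<xi>') (jet_prolong \<Phi> x)
                  (fst u, frechet_derivative \<Phi> (at (fst x, fst (snd x))) u))"
  using smooth_on_dyn_conn_t[OF open_jet_dom[OF assms(1)] assms(7)]
    smooth_on_dyn_conn_q[OF open_jet_dom[OF assms(1)] assms(7)]
    hlift_transform[OF assms(1,3,2,4,7,8,9)]
  by blast

end
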